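(* Let $q$ be a power of a prime $p$, let $n\geq1$, and write $2n=p^{\ell}n_0$ with integers $\ell\geq0$, $n_0>0$, $\gcd(n_0,p)=1$. Suppose $x^{n_0}-1=g_1(x)g_2(x)\cdots g_t(x)$ with $g_1,\ldots,g_t$ distinct monic irreducible polynomials in $\mathbb{F}_q[x]$ (so $x^{2n}-1=g_1(x)^{p^\ell}\cdots g_t(x)^{p^\ell}$). Then there are exactly $(p^{\ell}+1)^t$ distinct $\mathbb{F}_q$-linear additive conjucyclic codes of length $n$ over $\mathbb{F}_{q^2}$.
   Context: An $\mathbb{F}_q$-linear additive code of length $n$ over $\mathbb{F}_{q^2}$ is an $\mathbb{F}_q$-subspace of $\mathbb{F}_{q^2}^n$; it is conjucyclic if closed under $T(c_0,\ldots,c_{n-1})=(c_{n-1}^q,c_0,\ldots,c_{n-2})$. *)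

theory Defs
  imports "HOL-Computational_Algebra.Computational_Algebra" "HOL-Library.Cardinality"
begin

definition conj_shift :: "nat \<Rightarrow> 'Q::field list \<Rightarrow> 'Q list" where
  "conj_shift q c = (if c = [] then [] else (last c ^ q) # butlast c)"

text \<open>An F_q-linear additive conjucyclic code of length n over F_{q^2}: F_q is embedded
  into F_{q^2} via the field embedding emb; the code is an F_q-subspace of F_{q^2}^n
  closed under the conjucyclic shift.\<close>
definition additive_conjucyclic ::
  "('q::field \<Rightarrow> 'Q::field) \<Rightarrow> nat \<Rightarrow> nat \<Rightarrow> 'Q list set \<Rightarrow> bool" where
  "additive_conjucyclic emb q n C \<longleftrightarrow>
     C \<subseteq> {c. length c = n} \<and>
     replicate n 0 \<in> C \<and>
     (\<forall>x\<in>C. \<forall>y\<in>C. map2 (+) x y \<in> C) \<and>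
     (\<forall>a. \<forall>x\<in>C. map (\<lambda>z. emb a * z) x \<in> C) \<and>
     (\<forall>x\<in>C. conj_shift q x \<in> C)"

end

theory Submission
  imports Defs
begin

(* Choose w in F_{q^2} with w^q different from w and -w. Then w, w^q is an F_q-basis of F_{q^2}
   in which the Frobenius map x \<mapsto> x^q swaps the two coordinates. Reading the word
   (c_0, ..., c_{n-1}) with c_j = a_j w + a_{n+j} w^q as the residue of
   a_0 + a_1 x + ... + a_{2n-1} x^{2n-1} modulo x^{2n} - 1 turns the conjucyclic shift into
   multiplication by x. Hence the F_q-linear conjucyclic codes are exactly the ideals of
   F_q[x]/(x^{2n} - 1), and they correspond to the monic divisors of
   x^{2n} - 1 = (x^{n_0} - 1)^{p^l} = g_1^{p^l} ... g_t^{p^l}, of which there are (p^l + 1)^t. *)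

section \<open>Finite fields\<close>

lemma of_nat_CARD_eq_0: "of_nat CARD('a::{ring_1,finite}) = (0::'a)"
proof -
  have "(\<Sum>x\<in>UNIV. x + 1) = (\<Sum>x\<in>UNIV. x :: 'a)"
    by (rule sum.reindex_bij_witness[of _ "\<lambda>x. x - 1" "\<lambda>x. x + 1"]) auto
  then show ?thesis
    by (simp add: sum.distrib)
qed

lemma CHAR_eq_if_CARD_eq_prime_power:
  assumes "prime p" and "CARD('a::{idom,finite}) = p ^ e"
  shows "CHAR('a) = p"
proof -
  have "prime CHAR('a)"
    by (intro prime_CHAR_semidom finite_imp_CHAR_pos) simp
  moreover have "CHAR('a) dvd p ^ e"
    using of_nat_CARD_eq_0[where 'a='a] assms(2) of_nat_eq_0_iff_char_dvd by metis
  ultimately show ?thesis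
    using assms(1) prime_dvd_power primes_dvd_imp_eq by blast
qed

text \<open>Multiplication by a nonzero \<open>x\<close> permutes the nonzero elements.\<close>
lemma power_CARD_eq_self: "(x::'a::{field,finite}) ^ CARD('a) = x"
proof (cases "x = 0")
  case False
  define U where "U = UNIV - {0::'a}"
  have "finite U" "0 \<notin> U"
    by (simp_all add: U_def)
  have "bij_betw ((*) x) U U"
    by (rule bij_betwI[where g = "\<lambda>y. y / x"]) (use False in \<open>auto simp: U_def\<close>)
  then have "\<Prod>U = (\<Prod>y\<in>U. x * y)"
    using prod.reindex_bij_betw[of _ U U "\<lambda>y. y"] by simp
  also have "\<dots> = x ^ card U * \<Prod>U"
    by (simp add: prod.distrib)
  finally have "x ^ card U = 1"
    using \<open>finite U\<close> \<open>0 \<notin> U\<close> by simp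
  moreover have "CARD('a) = Suc (card U)"
    using card_Suc_Diff1[of UNIV "0::'a"] by (simp add: U_def)
  ultimately show ?thesis
    by simp
qed simp

lemma card_roots_power_eq_scaled:
  assumes "2 \<le> q"
  shows "card {x::'a::idom. x ^ q = c * x} \<le> q"
proof -
  define P :: "'a poly" where "P = monom 1 q - [:0, c:]"
  have coeff_P: "coeff P i = (if i = q then 1 else if i = 1 then - c else 0)" for i
    using assms by (auto simp: P_def coeff_pCons split: nat.split)
  have "P \<noteq> 0"
    using coeff_P[of q] by auto
  moreover have "degree P \<le> q"
    by (rule degree_le) (use assms in \<open>auto simp: coeff_P\<close>)
  moreover have "{x. x ^ q = c * x} = {x. poly P x = 0}"
    by (auto simp: P_def poly_monom)
  ultimately show ?thesis
    using card_poly_roots_bound[of P] by simp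
qed

text \<open>There are at most \<open>2q < q\<^sup>2\<close> roots of \<open>x\<^sup>q = x\<close> and \<open>x\<^sup>q = -x\<close>; in characteristic 2,
  where the two equations coincide, at most \<open>q\<close>.\<close>
lemma exists_normal_element:
  assumes card: "CARD('a::{field,finite}) = q ^ 2" and char: "CHAR('a) dvd q"
  shows "\<exists>w::'a. w ^ q \<noteq> w \<and> w ^ q \<noteq> - w"
proof (rule ccontr)
  let ?R = "\<lambda>c. {x::'a. x ^ q = c * x}"
  assume "\<not> ?thesis"
  then have UNIV_eq: "UNIV = ?R 1 \<union> ?R (- 1)"
    by auto
  have "2 \<le> CARD('a)"
    using card_mono[of UNIV "{0, 1::'a}"] by simp
  then have "2 \<le> q"
    using card mult_le_mono[of q 1 q 1] by (cases "q \<le> 1") (auto simp: power2_eq_square)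
  then have roots: "card (?R c) \<le> q" for c
    by (rule card_roots_power_eq_scaled)
  have "CHAR('a) \<noteq> 0" "CHAR('a) \<noteq> 1"
    by (simp_all add: finite_imp_CHAR_pos)
  then consider "CHAR('a) = 2" | "3 \<le> q"
  proof (cases "CHAR('a) = 2")
    case False
    with \<open>CHAR('a) \<noteq> 0\<close> \<open>CHAR('a) \<noteq> 1\<close> have "3 \<le> CHAR('a)"
      by linarith
    moreover have "CHAR('a) \<le> q"
      using char \<open>2 \<le> q\<close> by (simp add: dvd_imp_le)
    ultimately show ?thesis
      using that by linarith
  qed
  then show False
  proof cases
    case 1
    then have "UNIV = ?R 1"
      using UNIV_eq by (simp add: uminus_CHAR_2)
    then have "q ^ 2 = card (?R 1)"
      using card by (metis (no_types))
    then show False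
      using roots[of 1] \<open>2 \<le> q\<close> mult_le_mono1[of 2 q q] unfolding power2_eq_square by simp
  next
    case 2
    have "q ^ 2 \<le> card (?R 1) + card (?R (- 1))"
      using card_Un_le[of "?R 1" "?R (- 1)"] by (simp only: card UNIV_eq[symmetric])
    also have "\<dots> \<le> q + q"
      using roots[of 1] roots[of "- 1"] by (rule add_mono)
    finally show False
      using 2 mult_le_mono1[of 3 q q] unfolding power2_eq_square by linarith
  qed
qed

lemma freshmans_dream_diff:
  fixes x y :: "'a::comm_ring_1"
  assumes "prime CHAR('a)" and "m = CHAR('a) ^ l"
  shows "(x - y) ^ m = x ^ m - y ^ m"
  using freshmans_dream'[OF assms, of "x - y" y] by (simp add: eq_diff_eq)

lemma monom_minus_one_power_CHAR:
  assumes "prime CHAR('a::comm_ring_1)" and "m = CHAR('a) ^ l"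
  shows "(monom 1 k - 1 :: 'a poly) ^ m = monom 1 (k * m) - 1"
  using freshmans_dream_diff[where 'a="'a poly"] assms by (simp add: monom_power)

section \<open>Frobenius coordinates\<close>

locale field_embedding =
  fixes emb :: "'a::field \<Rightarrow> 'b::field"
  assumes emb_add: "emb (a + b) = emb a + emb b"
    and emb_mult: "emb (a * b) = emb a * emb b"
    and emb_one [simp]: "emb 1 = 1"
begin

lemma emb_zero [simp]: "emb 0 = 0"
  using emb_add[of 0 0] by (metis add.right_neutral add_left_cancel)

lemma emb_minus [simp]: "emb (- a) = - emb a"
  using emb_add[of a "- a"] by (simp add: eq_neg_iff_add_eq_0 add.commute)

lemma emb_diff: "emb (a - b) = emb a - emb b"
  using emb_add[of a "- b"] by simp

lemma emb_power: "emb (a ^ k) = emb a ^ k"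
  by (induction k) (simp_all add: emb_mult)

lemma emb_eq_0_iff [simp]: "emb a = 0 \<longleftrightarrow> a = 0"
proof
  assume "emb a = 0"
  show "a = 0"
  proof (rule ccontr)
    assume "a \<noteq> 0"
    then have "emb a * emb (inverse a) = 1"
      by (simp flip: emb_mult)
    with \<open>emb a = 0\<close> show False
      by simp
  qed
qed simp

lemma emb_eq_iff [simp]: "emb a = emb b \<longleftrightarrow> a = b"
  using emb_eq_0_iff[of "a - b"] by (simp add: emb_diff)

text \<open>If \<open>w\<close> and \<open>w\<^sup>q\<close> were dependent, \<open>w\<^sup>q = c w\<close> with \<open>c\<^sup>2 = 1\<close>.\<close>
lemma normal_pair_independent:
  fixes q :: nat and w :: 'b
  assumes fixed: "\<And>c. emb c ^ q = emb c" and w_qq: "(w ^ q) ^ q = w"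
    and "w ^ q \<noteq> w" and "w ^ q \<noteq> - w"
    and zero: "emb a * w + emb b * w ^ q = 0"
  shows "a = 0 \<and> b = 0"
proof -
  have "w \<noteq> 0"
    using w_qq \<open>w ^ q \<noteq> w\<close> by (cases "q = 0") auto
  have "b = 0"
  proof (rule ccontr)
    assume "b \<noteq> 0"
    define c where "c = - a / b"
    have "emb b * w ^ q = emb b * (emb c * w)"
      using zero \<open>b \<noteq> 0\<close> by (simp add: c_def algebra_simps eq_neg_iff_add_eq_0 flip: emb_mult)
    then have w_q: "w ^ q = emb c * w"
      using \<open>b \<noteq> 0\<close> by simp
    have "1 * w = (emb c * w) ^ q"
      using w_qq by (simp add: w_q)
    also have "\<dots> = emb (c * c) * w"
      by (simp add: power_mult_distrib fixed w_q emb_mult)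
    finally have "c * c = 1"
      using \<open>w \<noteq> 0\<close> by (metis emb_eq_iff emb_one mult_cancel_right)
    then have "c = 1 \<or> c = - 1"
      by (simp add: square_eq_1_iff)
    then show False
      using w_q \<open>w ^ q \<noteq> w\<close> \<open>w ^ q \<noteq> - w\<close> by auto
  qed
  then show ?thesis
    using zero \<open>w \<noteq> 0\<close> by simp
qed

end

text \<open>\<open>L a b\<close> stands for \<open>a w + b w\<^sup>q\<close> with \<open>w\<close> a normal element (see
  \<open>frobenius_coordinates_normal_element\<close>): coordinates in which the Frobenius map
  \<open>x \<mapsto> x\<^sup>q\<close> becomes the swap.\<close>
locale frobenius_coordinates =
  fixes emb :: "'q::field \<Rightarrow> 'Q::field" and q :: nat and L :: "'q \<Rightarrow> 'q \<Rightarrow> 'Q"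
  assumes bij_L: "bij (\<lambda>(a, b). L a b)"
    and L_add: "L a b + L a' b' = L (a + a') (b + b')"
    and L_scale: "emb c * L a b = L (c * a) (c * b)"
    and L_power: "L a b ^ q = L b a"

lemma frobenius_coordinates_normal_element:
  fixes emb :: "'q::{field,finite} \<Rightarrow> 'Q::{field,finite}" and q :: nat and w :: 'Q
  assumes "field_embedding emb" and card: "CARD('Q) = CARD('q) ^ 2"
    and fixed: "\<And>c. emb c ^ q = emb c"
    and frobenius_add: "\<And>x y :: 'Q. (x + y) ^ q = x ^ q + y ^ q"
    and w: "(w ^ q) ^ q = w" "w ^ q \<noteq> w" "w ^ q \<noteq> - w"
  shows "frobenius_coordinates emb q (\<lambda>a b. emb a * w + emb b * w ^ q)"
proof -
  interpret field_embedding emb by fact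
  let ?L = "\<lambda>(a, b). emb a * w + emb b * w ^ q"
  have "inj ?L"
  proof (rule injI)
    fix x y assume "?L x = ?L y"
    then have "emb (fst x - fst y) * w + emb (snd x - snd y) * w ^ q = 0"
      by (auto simp: emb_diff algebra_simps split: prod.splits)
    then show "x = y"
      using normal_pair_independent[OF fixed w] by (metis eq_iff_diff_eq_0 prod_eq_iff)
  qed
  then have "card (range ?L) = CARD('Q)"
    by (simp add: card_image card power2_eq_square)
  then have "bij ?L"
    using \<open>inj ?L\<close> by (simp add: bij_def card_subset_eq)
  then show ?thesis
    by unfold_locales
      (simp_all add: emb_add emb_mult algebra_simps frobenius_add fixed w(1))
qed

lemma finite_field_frobenius_coordinates:
  fixes emb :: "'q::{field,finite} \<Rightarrow> 'Q::{field,finite}"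
  assumes "field_embedding emb" and "prime p" and "k \<ge> 1" and "q = p ^ k"
    and "CARD('q) = q" and "CARD('Q) = q ^ 2"
  shows "\<exists>L. frobenius_coordinates emb q L"
proof -
  interpret field_embedding emb by fact
  have "CARD('Q) = p ^ (k * 2)"
    using assms by (simp add: power_mult)
  with \<open>prime p\<close> have char: "CHAR('Q) = p"
    by (rule CHAR_eq_if_CARD_eq_prime_power)
  have fixed: "emb c ^ q = emb c" for c
    using power_CARD_eq_self[of c] assms by (simp flip: emb_power)
  have frobenius_add: "(x + y) ^ q = x ^ q + y ^ q" for x y :: 'Q
    using freshmans_dream'[where 'a='Q, of q k] char assms by simp
  have "CHAR('Q) dvd q"
    using assms char by simp
  then obtain w :: 'Q where "w ^ q \<noteq> w" "w ^ q \<noteq> - w"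
    using exists_normal_element assms by blast
  moreover have "(w ^ q) ^ q = w"
    using power_CARD_eq_self[of w] assms by (simp flip: power_mult add: power2_eq_square)
  moreover have "CARD('Q) = CARD('q) ^ 2"
    using assms by simp
  ultimately show ?thesis
    using frobenius_coordinates_normal_element[OF \<open>field_embedding emb\<close> _ fixed frobenius_add]
    by blast
qed

section \<open>Monic divisors\<close>

definition monic_divisors :: "'a::field poly \<Rightarrow> 'a poly set" where
  "monic_divisors f = {d. lead_coeff d = 1 \<and> d dvd f}"

lemma monic_dvd_antisym:
  fixes a b :: "'a::field poly"
  assumes "lead_coeff a = 1" and "lead_coeff b = 1" and "a dvd b" and "b dvd a"
  shows "a = b"
proof -
  obtain c where c: "b = a * c"
    using \<open>a dvd b\<close> by blast
  obtain e where e: "a = b * e"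
    using \<open>b dvd a\<close> by blast
  have "a \<noteq> 0"
    using assms(1) by auto
  then have "c * e = 1"
    using c e by (metis mult.assoc mult_cancel_left1)
  then obtain k where "c = [:k:]"
    using is_unit_poly_iff by (metis dvdI)
  moreover have "lead_coeff c = 1"
    using assms c by (simp add: lead_coeff_mult)
  ultimately show ?thesis
    using c by simp
qed

lemma prime_elem_dvd_prod_iff:
  fixes f :: "'b \<Rightarrow> 'a::comm_semiring_1"
  assumes "prime_elem p" and "finite A"
  shows "p dvd prod f A \<longleftrightarrow> (\<exists>x\<in>A. p dvd f x)"
  using assms(2)
  by induction (auto simp: prime_elem_dvd_mult_iff[OF assms(1)] prime_elem_not_unit[OF assms(1)])

lemma power_dvd_mult_power_imp_le:
  fixes g d :: "'a::idom"
  assumes "g \<noteq> 0" and "\<not> g dvd d" and "g ^ i dvd d * g ^ j"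
  shows "i \<le> j"
proof (rule ccontr)
  assume "\<not> i \<le> j"
  then have "g ^ Suc j dvd g ^ i"
    by (intro le_imp_power_dvd) simp
  then have "g ^ Suc j dvd d * g ^ j"
    using assms(3) by (rule dvd_trans)
  then show False
    using assms(1,2) by simp
qed

lemma prime_elem_dvd_mult_power_cancel:
  fixes g d x :: "'a::idom"
  assumes g: "prime_elem g" and "\<not> g dvd d" and "d dvd x * g ^ m"
  shows "d dvd x"
  using assms(3)
proof (induction m arbitrary: x)
  case (Suc m)
  have "g \<noteq> 0"
    using g by (simp add: prime_elem_def)
  have "d dvd (x * g ^ m) * g"
    using Suc.prems by (simp add: ac_simps)
  then obtain k where k: "(x * g ^ m) * g = d * k" ..
  have "g dvd d * k"
    unfolding k[symmetric] by (rule dvd_triv_right)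
  then have "g dvd k"
    using prime_elem_dvd_mult_iff[OF g] \<open>\<not> g dvd d\<close> by simp
  then obtain k' where "k = g * k'" ..
  with k have "(x * g ^ m) * g = (d * k') * g"
    by (simp add: ac_simps)
  then have "x * g ^ m = d * k'"
    using \<open>g \<noteq> 0\<close> by simp
  then show ?case
    by (rule Suc.IH[OF dvdI])
qed simp

lemma poly_power_mult_decomposition:
  fixes g e :: "'a::field poly"
  assumes "prime_elem g" and "e \<noteq> 0"
  obtains j d where "e = g ^ j * d" and "\<not> g dvd d"
  using assms(2)
proof (induction "degree e" arbitrary: e thesis rule: less_induct)
  case (less e)
  show ?case
  proof (cases "g dvd e")
    case False
    then show ?thesis
      using less.prems(1)[of 0 e] by simp
  next
    case True
    then obtain e' where e': "e = g * e'" ..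
    have "e' \<noteq> 0" "g \<noteq> 0" "0 < degree g"
      using e' less.prems(2) assms(1)
      by (auto simp: prime_elem_def is_unit_iff_degree)
    then have "degree e' < degree e"
      using e' by (simp add: degree_mult_eq)
    then obtain j d where "e' = g ^ j * d" "\<not> g dvd d"
      using less.hyps \<open>e' \<noteq> 0\<close> by blast
    then show ?thesis
      using less.prems(1)[of "Suc j" d] e' by (simp add: mult.assoc)
  qed
qed

lemma card_monic_divisors_mult_prime_power:
  fixes A g :: "'a::field poly"
  assumes "A \<noteq> 0" and g: "prime_elem g" "lead_coeff g = 1" and "\<not> g dvd A"
  shows "card (monic_divisors (A * g ^ m)) = card (monic_divisors A) * Suc m"
proof -
  define h where "h = (\<lambda>(d, j). d * g ^ j)"
  have "g \<noteq> 0"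
    using g by auto
  have not_dvd: "\<not> g dvd d" if "d \<in> monic_divisors A" for d
    using that \<open>\<not> g dvd A\<close> dvd_trans[of g d A] by (auto simp: monic_divisors_def)
  have "bij_betw h (monic_divisors A \<times> {0..m}) (monic_divisors (A * g ^ m))"
  proof (rule bij_betwI')
    fix x y assume x: "x \<in> monic_divisors A \<times> {0..m}" and y: "y \<in> monic_divisors A \<times> {0..m}"
    obtain d i d' j where xy: "x = (d, i)" "y = (d', j)"
      by force
    show "h x = h y \<longleftrightarrow> x = y"
    proof
      assume "h x = h y"
      then have eq: "d * g ^ i = d' * g ^ j"
        by (simp add: h_def xy)
      have "\<not> g dvd d" "\<not> g dvd d'"
        using not_dvd x y xy by auto
      moreover have "g ^ i dvd d' * g ^ j"
        by (simp flip: eq)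
      moreover have "g ^ j dvd d * g ^ i"
        by (simp add: eq)
      ultimately have "i \<le> j" "j \<le> i"
        using power_dvd_mult_power_imp_le[OF \<open>g \<noteq> 0\<close>] by blast+
      then have "i = j"
        by simp
      then show "x = y"
        using eq \<open>g \<noteq> 0\<close> xy by simp
    qed simp
  next
    fix x assume "x \<in> monic_divisors A \<times> {0..m}"
    then obtain d j where "x = (d, j)" "lead_coeff d = 1" "d dvd A" "j \<le> m"
      by (auto simp: monic_divisors_def)
    moreover have "d * g ^ j dvd A * g ^ m"
      using calculation by (simp add: mult_dvd_mono le_imp_power_dvd)
    ultimately show "h x \<in> monic_divisors (A * g ^ m)"
      using g by (simp add: h_def monic_divisors_def lead_coeff_mult lead_coeff_power)
  next
    fix e assume e: "e \<in> monic_divisors (A * g ^ m)"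
    then have "e dvd A * g ^ m" "e \<noteq> 0"
      using \<open>A \<noteq> 0\<close> \<open>g \<noteq> 0\<close> by (auto simp: monic_divisors_def)
    then obtain j d where d: "e = g ^ j * d" "\<not> g dvd d"
      using poly_power_mult_decomposition[OF g(1)] by blast
    have "g ^ j dvd e" "d dvd e"
      using d(1) by simp_all
    then have g_dvd: "g ^ j dvd A * g ^ m" and d_dvd: "d dvd A * g ^ m"
      using dvd_trans \<open>e dvd A * g ^ m\<close> by blast+
    from g_dvd have "j \<le> m"
      by (rule power_dvd_mult_power_imp_le[OF \<open>g \<noteq> 0\<close> \<open>\<not> g dvd A\<close>])
    moreover have "d dvd A"
      using d_dvd by (rule prime_elem_dvd_mult_power_cancel[OF g(1) d(2)])
    moreover have "lead_coeff d = 1"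
      using e d(1) g by (simp add: monic_divisors_def lead_coeff_mult lead_coeff_power)
    ultimately show "\<exists>x\<in>monic_divisors A \<times> {0..m}. e = h x"
      using d(1) by (intro bexI[of _ "(d, j)"]) (simp_all add: h_def monic_divisors_def mult.commute)
  qed
  then show ?thesis
    using bij_betw_same_card by (fastforce simp: card_cartesian_product)
qed

lemma card_monic_divisors_prod_prime_powers:
  fixes g :: "nat \<Rightarrow> 'a::field poly"
  assumes "\<And>i. i < t \<Longrightarrow> lead_coeff (g i) = 1 \<and> irreducible (g i)" and "inj_on g {..<t}"
  shows "card (monic_divisors (\<Prod>i<t. g i ^ m i)) = (\<Prod>i<t. Suc (m i))"
  using assms
proof (induction t)
  case 0
  have "monic_divisors (1 :: 'a poly) = {1}"
    by (auto simp: monic_divisors_def intro: monic_dvd_antisym)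
  then show ?case
    by simp
next
  case (Suc t)
  have g: "lead_coeff (g i) = 1" "prime_elem (g i)" if "i < Suc t" for i
    using Suc.prems(1)[OF that] by (simp_all add: field_poly_irreducible_imp_prime)
  have "\<not> g t dvd g i ^ m i" if "i < t" for i
  proof
    assume "g t dvd g i ^ m i"
    then have "g t dvd g i"
      using g(2)[of t] prime_elem_dvd_power by blast
    then have "g i dvd g t"
      using Suc.prems(1)[of i] g(2)[of t] that by (auto dest: irreducibleD' prime_elem_not_unit)
    then have "g t = g i"
      using monic_dvd_antisym[OF g(1)[of t] g(1)[of i]] \<open>g t dvd g i\<close> that by simp
    then show False
      using Suc.prems(2) that by (auto dest: inj_onD)
  qed
  then have not_dvd: "\<not> g t dvd (\<Prod>i<t. g i ^ m i)"
    using prime_elem_dvd_prod_iff[OF g(2)[of t], of "{..<t}"] by auto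
  have nonzero: "(\<Prod>i<t. g i ^ m i) \<noteq> 0"
    using g(2) by (auto simp: prime_elem_def)
  have "card (monic_divisors (\<Prod>i<Suc t. g i ^ m i))
      = card (monic_divisors ((\<Prod>i<t. g i ^ m i) * g t ^ m t))"
    by simp
  also have "\<dots> = card (monic_divisors (\<Prod>i<t. g i ^ m i)) * Suc (m t)"
    using card_monic_divisors_mult_prime_power[OF nonzero g(2)[OF lessI] g(1)[OF lessI] not_dvd] .
  also have "\<dots> = (\<Prod>i<Suc t. Suc (m i))"
    using Suc by (simp add: inj_on_def)
  finally show ?case .
qed

lemma poly_ideal_eq_multiples:
  fixes I :: "'a::field poly set"
  assumes add: "\<And>x y. x \<in> I \<Longrightarrow> y \<in> I \<Longrightarrow> x + y \<in> I"
    and mult: "\<And>x c. x \<in> I \<Longrightarrow> c * x \<in> I"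
    and "f \<in> I" and "f \<noteq> 0"
  obtains d where "lead_coeff d = 1" and "I = {x. d dvd x}"
proof -
  define k where "k = (LEAST k. \<exists>x\<in>I. x \<noteq> 0 \<and> degree x = k)"
  obtain d0 where d0: "d0 \<in> I" "d0 \<noteq> 0" "degree d0 = k"
    using LeastI[of "\<lambda>k. \<exists>x\<in>I. x \<noteq> 0 \<and> degree x = k" "degree f"] assms(3,4)
    unfolding k_def by blast
  have "d0 dvd x" if "x \<in> I" for x
  proof (rule ccontr)
    assume "\<not> d0 dvd x"
    then have "x mod d0 \<noteq> 0"
      by (simp add: dvd_eq_mod_eq_0)
    moreover have "x + (- (x div d0)) * d0 \<in> I"
      using add[OF that mult[OF d0(1)]] .
    then have "x mod d0 \<in> I"
      by (simp flip: minus_div_mult_eq_mod)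
    ultimately have "k \<le> degree (x mod d0)"
      unfolding k_def by (auto intro: Least_le)
    then show False
      using degree_mod_less'[OF d0(2) \<open>x mod d0 \<noteq> 0\<close>] d0(3) by simp
  qed
  then have "I = {x. d0 dvd x}"
    using mult[OF d0(1)] by (auto simp: mult.commute)
  moreover have "smult (inverse (lead_coeff d0)) d0 dvd x \<longleftrightarrow> d0 dvd x" for x
    using d0(2) by (simp add: smult_dvd_iff)
  ultimately show ?thesis
    using that[of "smult (inverse (lead_coeff d0)) d0"] d0(2) by simp
qed

section \<open>Conjucyclic codes as ideals\<close>

lemma coeff_monom_minus_one:
  assumes "0 < m"
  shows "coeff (monom 1 m - 1 :: 'a::comm_ring_1 poly) i = (if i = m then 1 else if i = 0 then - 1 else 0)"
  using assms by auto

lemma degree_monom_minus_one: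
  assumes "0 < m"
  shows "degree (monom 1 m - 1 :: 'a::{comm_ring_1,zero_neq_one} poly) = m"
  using assms by (intro antisym degree_le le_degree) (auto simp: coeff_monom_minus_one)

lemma monom_minus_one_neq_0:
  assumes "0 < m"
  shows "monom 1 m - 1 \<noteq> (0 :: 'a::{comm_ring_1,zero_neq_one} poly)"
  using degree_monom_minus_one[OF assms, where 'a='a] assms by auto

lemma coeff_mod_monom_minus_one:
  fixes a :: "'a::field poly"
  assumes "0 < m" and "m \<le> i"
  shows "coeff (a mod (monom 1 m - 1)) i = 0"
proof (cases "a mod (monom 1 m - 1) = 0")
  case False
  then have "degree (a mod (monom 1 m - 1)) < m"
    using degree_mod_less'[of "monom 1 m - 1"] degree_monom_minus_one[OF assms(1)] assms(1)
    by (metis degree_0 less_irrefl)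
  then show ?thesis
    using assms(2) by (intro coeff_eq_0) simp
qed simp

lemma coeff_pCons_0_mod_monom_minus_one:
  fixes a :: "'a::field poly"
  assumes "0 < m"
  defines "f \<equiv> monom 1 m - 1"
  shows "coeff (pCons 0 a mod f) i =
    (if i = 0 then coeff (a mod f) (m - 1) else if i < m then coeff (a mod f) (i - 1) else 0)"
proof -
  define r where "r = a mod f"
  \<comment> \<open>\<open>x r\<close> overflows only in degree \<open>m\<close>, which is folded back to degree 0\<close>
  define r' where "r' = pCons 0 r - smult (coeff r (m - 1)) f"
  have coeff_r': "coeff r' i =
    (if i = 0 then coeff r (m - 1) else if i < m then coeff r (i - 1) else 0)" for i
    using assms coeff_mod_monom_minus_one[OF assms(1), where a = a and i = "i - 1"]
    by (cases i) (auto simp: r'_def r_def coeff_monom_minus_one)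
  have "degree r' < degree f"
    using assms by (intro degree_lessI) (auto simp: coeff_r' degree_monom_minus_one)
  then have "r' mod f = r'"
    by (rule mod_poly_less)
  have "pCons 0 a mod f = ([:0, 1:] * a) mod f"
    by simp
  also have "\<dots> = ([:0, 1:] * r) mod f"
    unfolding r_def by (rule mod_mult_right_eq[symmetric])
  also have "[:0, 1:] * r = r' + smult (coeff r (m - 1)) f"
    by (simp add: r'_def)
  also have "(r' + smult (coeff r (m - 1)) f) mod f = r'"
    using \<open>r' mod f = r'\<close> by (simp add: poly_mod_add_left mod_smult_left)
  finally show ?thesis
    by (simp add: coeff_r' r_def)
qed

context frobenius_coordinates
begin

lemma L_zero [simp]: "L 0 0 = 0"
  using L_add[of 0 0 0 0] by (metis add.right_neutral add_left_cancel)

lemma L_eq_iff: "L a b = L a' b' \<longleftrightarrow> a = a' \<and> b = b'"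
  using bij_L by (auto simp: bij_def inj_def)

lemma L_surj: "\<exists>a b. L a b = z"
  using bij_L by (auto simp: bij_def surj_def) metis

end

locale conjucyclic_words = frobenius_coordinates emb q L
  for emb :: "'q::field \<Rightarrow> 'Q::field" and q L +
  fixes n :: nat
  assumes n_pos: "0 < n"
begin

abbreviation modulus :: "'q poly" where
  "modulus \<equiv> monom 1 (2 * n) - 1"

definition word_of_poly :: "'q poly \<Rightarrow> 'Q list" where
  "word_of_poly a = map (\<lambda>j. L (coeff (a mod modulus) j) (coeff (a mod modulus) (n + j))) [0..<n]"

lemma length_word_of_poly [simp]: "length (word_of_poly a) = n"
  by (simp add: word_of_poly_def)

lemma nth_word_of_poly:
  "j < n \<Longrightarrow> word_of_poly a ! j = L (coeff (a mod modulus) j) (coeff (a mod modulus) (n + j))"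
  by (simp add: word_of_poly_def)

lemma word_of_poly_0: "word_of_poly 0 = replicate n 0"
  by (rule nth_equalityI) (simp_all add: nth_word_of_poly)

lemma word_of_poly_add: "word_of_poly (a + b) = map2 (+) (word_of_poly a) (word_of_poly b)"
  by (rule nth_equalityI) (simp_all add: nth_word_of_poly poly_mod_add_left L_add)

lemma word_of_poly_smult: "word_of_poly (smult c a) = map (\<lambda>z. emb c * z) (word_of_poly a)"
  by (rule nth_equalityI) (simp_all add: nth_word_of_poly mod_smult_left L_scale)

lemma word_of_poly_eq_iff: "word_of_poly a = word_of_poly b \<longleftrightarrow> a mod modulus = b mod modulus"
proof
  assume eq: "word_of_poly a = word_of_poly b"
  show "a mod modulus = b mod modulus"
  proof (rule poly_eqI)
    fix i
    have same_coords: "coeff (a mod modulus) j = coeff (b mod modulus) j \<and>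
        coeff (a mod modulus) (n + j) = coeff (b mod modulus) (n + j)" if "j < n" for j
      using arg_cong[OF eq, of "\<lambda>c. c ! j"] that by (simp add: nth_word_of_poly L_eq_iff)
    consider "i < n" | "n \<le> i" "i < 2 * n" | "2 * n \<le> i"
      by linarith
    then show "coeff (a mod modulus) i = coeff (b mod modulus) i"
    proof cases
      case 1
      then show ?thesis
        using same_coords[of i] by simp
    next
      case 2
      then show ?thesis
        using same_coords[of "i - n"] by simp
    next
      case 3
      then show ?thesis
        using n_pos by (simp add: coeff_mod_monom_minus_one)
    qed
  qed
qed (simp add: word_of_poly_def)

lemma word_of_poly_surj:
  assumes "length c = n"
  shows "\<exists>a. word_of_poly a = c"
proof -
  obtain u v where uv: "\<And>j. L (u j) (v j) = c ! j"
    using choice[of "\<lambda>j ab. L (fst ab) (snd ab) = c ! j"] L_surj by force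
  define a where "a = Poly (map u [0..<n] @ map v [0..<n])"
  have coeff_a: "coeff a i = (if i < n then u i else if i < 2 * n then v (i - n) else 0)" for i
    by (simp add: a_def nth_default_def nth_append)
  have "degree a < degree modulus"
    using n_pos by (intro degree_lessI) (auto simp: coeff_a degree_monom_minus_one)
  then have "a mod modulus = a"
    by (rule mod_poly_less)
  then have "word_of_poly a = c"
    using assms by (intro nth_equalityI) (simp_all add: nth_word_of_poly coeff_a uv)
  then show ?thesis ..
qed

lemma word_of_poly_pCons_0: "word_of_poly (pCons 0 a) = conj_shift q (word_of_poly a)"
proof (rule nth_equalityI)
  have "word_of_poly a \<noteq> []"
    using n_pos length_word_of_poly[of a] by (auto simp del: length_word_of_poly)
  then show "length (word_of_poly (pCons 0 a)) = length (conj_shift q (word_of_poly a))"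
    using n_pos by (simp add: conj_shift_def)
  fix j assume "j < length (word_of_poly (pCons 0 a))"
  then have "j < n"
    by simp
  show "word_of_poly (pCons 0 a) ! j = conj_shift q (word_of_poly a) ! j"
  proof (cases j)
    case 0
    have "last (word_of_poly a) = word_of_poly a ! (n - 1)"
      using \<open>word_of_poly a \<noteq> []\<close> by (simp add: last_conv_nth)
    then show ?thesis
      using 0 n_pos \<open>word_of_poly a \<noteq> []\<close>
      by (simp add: conj_shift_def nth_word_of_poly coeff_pCons_0_mod_monom_minus_one L_power
          mult_2)
  next
    case (Suc i)
    then show ?thesis
      using \<open>j < n\<close> \<open>word_of_poly a \<noteq> []\<close>
      by (simp add: conj_shift_def nth_word_of_poly nth_butlast coeff_pCons_0_mod_monom_minus_one)
  qed
qed

lemma additive_conjucyclic_multiples: "additive_conjucyclic emb q n (word_of_poly ` {a. d dvd a})"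
  unfolding additive_conjucyclic_def
proof (intro conjI ballI allI)
  show "word_of_poly ` {a. d dvd a} \<subseteq> {c. length c = n}"
    by auto
  show "replicate n 0 \<in> word_of_poly ` {a. d dvd a}"
    using word_of_poly_0 by force
next
  fix x y assume "x \<in> word_of_poly ` {a. d dvd a}" "y \<in> word_of_poly ` {a. d dvd a}"
  then obtain a b where "x = word_of_poly a" "d dvd a" "y = word_of_poly b" "d dvd b"
    by auto
  then show "map2 (+) x y \<in> word_of_poly ` {a. d dvd a}"
    by (intro image_eqI[of _ _ "a + b"]) (simp_all add: word_of_poly_add)
next
  fix c x assume "x \<in> word_of_poly ` {a. d dvd a}"
  then obtain a where "x = word_of_poly a" "d dvd a"
    by auto
  then show "map (\<lambda>z. emb c * z) x \<in> word_of_poly ` {a. d dvd a}"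
    by (intro image_eqI[of _ _ "smult c a"]) (simp_all add: word_of_poly_smult dvd_smult)
next
  fix x assume "x \<in> word_of_poly ` {a. d dvd a}"
  then obtain a where "x = word_of_poly a" "d dvd a"
    by auto
  moreover from \<open>d dvd a\<close> have "d dvd [:0, 1:] * a"
    by (rule dvd_mult)
  ultimately show "conj_shift q x \<in> word_of_poly ` {a. d dvd a}"
    by (intro image_eqI[of _ _ "pCons 0 a"]) (simp_all add: word_of_poly_pCons_0)
qed

lemma additive_conjucyclic_mult_closed:
  assumes C: "additive_conjucyclic emb q n C" and x: "word_of_poly x \<in> C"
  shows "word_of_poly (c * x) \<in> C"
proof (induction c)
  case 0
  then show ?case
    using C by (simp add: word_of_poly_0 additive_conjucyclic_def)
next
  case (pCons a c)
  have "word_of_poly (pCons a c * x) =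
      map2 (+) (map (\<lambda>z. emb a * z) (word_of_poly x)) (conj_shift q (word_of_poly (c * x)))"
    by (simp add: word_of_poly_add word_of_poly_smult word_of_poly_pCons_0)
  also have "\<dots> \<in> C"
    using C x pCons.IH by (simp add: additive_conjucyclic_def)
  finally show ?case .
qed

lemma additive_conjucyclic_eq_multiples:
  assumes C: "additive_conjucyclic emb q n C"
  obtains d where "d \<in> monic_divisors modulus" and "C = word_of_poly ` {a. d dvd a}"
proof -
  define I where "I = {a. word_of_poly a \<in> C}"
  have "word_of_poly modulus = word_of_poly 0"
    by (simp add: word_of_poly_eq_iff)
  then have "modulus \<in> I"
    using C by (simp add: I_def word_of_poly_0 additive_conjucyclic_def)
  have "modulus \<noteq> 0"
    by (rule monom_minus_one_neq_0) (simp add: n_pos)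
  have add: "x + y \<in> I" if "x \<in> I" "y \<in> I" for x y
    using that C by (simp add: I_def word_of_poly_add additive_conjucyclic_def)
  have mult: "c * x \<in> I" if "x \<in> I" for c x
    using that additive_conjucyclic_mult_closed[OF C, of x c] by (simp add: I_def)
  obtain d where d: "lead_coeff d = 1" "I = {x. d dvd x}"
    by (rule poly_ideal_eq_multiples[OF add mult \<open>modulus \<in> I\<close> \<open>modulus \<noteq> 0\<close>])
  have "C = word_of_poly ` I"
  proof
    show "C \<subseteq> word_of_poly ` I"
    proof
      fix c assume "c \<in> C"
      then obtain a where "word_of_poly a = c"
        using C word_of_poly_surj by (auto simp: additive_conjucyclic_def)
      with \<open>c \<in> C\<close> show "c \<in> word_of_poly ` I"
        by (auto simp: I_def)
    qed
  qed (auto simp: I_def)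
  with d \<open>modulus \<in> I\<close> show ?thesis
    using that by (simp add: monic_divisors_def)
qed

theorem card_additive_conjucyclic:
  "card {C. additive_conjucyclic emb q n C} = card (monic_divisors modulus)"
proof -
  let ?code = "\<lambda>d. word_of_poly ` {a. d dvd a}"
  have dvd_if_subset: "d dvd d'" if "?code d' \<subseteq> ?code d" "d \<in> monic_divisors modulus" for d d'
  proof -
    have "word_of_poly d' \<in> ?code d"
      using that(1) dvd_refl[of d'] by blast
    then obtain a where "d dvd a" "word_of_poly d' = word_of_poly a"
      by auto
    then have "modulus dvd d' - a"
      by (simp add: word_of_poly_eq_iff mod_eq_dvd_iff)
    moreover have "d dvd modulus"
      using that(2) by (simp add: monic_divisors_def)
    ultimately have "d dvd (d' - a) + a"
      using \<open>d dvd a\<close> by (blast intro: dvd_add dvd_trans)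
    then show "d dvd d'"
      by simp
  qed
  have "bij_betw ?code (monic_divisors modulus) {C. additive_conjucyclic emb q n C}"
  proof (rule bij_betwI')
    fix d d' assume d: "d \<in> monic_divisors modulus" and d': "d' \<in> monic_divisors modulus"
    show "?code d = ?code d' \<longleftrightarrow> d = d'"
    proof
      assume eq: "?code d = ?code d'"
      have "d dvd d'"
        by (rule dvd_if_subset[OF _ d]) (simp add: eq)
      moreover have "d' dvd d"
        by (rule dvd_if_subset[OF _ d']) (simp add: eq)
      ultimately show "d = d'"
        using d d' by (intro monic_dvd_antisym[of d d']) (simp_all add: monic_divisors_def)
    qed simp
  next
    show "?code d \<in> {C. additive_conjucyclic emb q n C}" for d
      using additive_conjucyclic_multiples by simp
  next
    fix C assume "C \<in> {C. additive_conjucyclic emb q n C}"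
    then obtain d where "d \<in> monic_divisors modulus" "C = ?code d"
      by (auto elim: additive_conjucyclic_eq_multiples)
    then show "\<exists>d\<in>monic_divisors modulus. C = ?code d" ..
  qed
  then show ?thesis
    by (rule bij_betw_same_card[symmetric])
qed

end

theorem theorem4p1:
  fixes emb :: "'q::{field,finite} \<Rightarrow> 'Q::{field,finite}"
    and p q k n l n0 t :: nat
    and g :: "nat \<Rightarrow> 'q poly"
  assumes "prime p" and "k \<ge> 1" and "q = p ^ k"
    and "CARD('q) = q" and "CARD('Q) = q ^ 2"
    and "inj emb"
    and "\<And>a b. emb (a + b) = emb a + emb b"
    and "\<And>a b. emb (a * b) = emb a * emb b"
    and "emb 1 = 1"
    and "n \<ge> 1"
    and "2 * n = p ^ l * n0" and "n0 > 0" and "coprime n0 p"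
    and "\<And>i. i < t \<Longrightarrow> lead_coeff (g i) = 1 \<and> irreducible (g i)"
    and "inj_on g {..<t}"
    and "(\<Prod>i<t. g i) = monom 1 n0 - 1"
  shows "card {C. additive_conjucyclic emb q n C} = (p ^ l + 1) ^ t"
proof -
  (* inj emb holds for every field homomorphism, and coprime n0 p (which makes the g i distinct
     in the paper) is subsumed by the hypothesis inj_on g {..<t}. *)
  have "field_embedding emb"
    using assms(7-9) by unfold_locales
  then obtain L where "frobenius_coordinates emb q L"
    using finite_field_frobenius_coordinates assms(1-5) by blast
  with \<open>n \<ge> 1\<close> interpret conjucyclic_words emb q L n
    by (simp add: conjucyclic_words_def conjucyclic_words_axioms_def)
  have "CHAR('q) = p"
    using \<open>prime p\<close> by (rule CHAR_eq_if_CARD_eq_prime_power) (simp add: assms(3,4))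
  then have "monom 1 (2 * n) - 1 = (monom 1 n0 - 1 :: 'q poly) ^ p ^ l"
    using monom_minus_one_power_CHAR[where 'a='q, of "p ^ l" l n0] assms(1,11)
    by (simp add: mult.commute)
  also have "\<dots> = (\<Prod>i<t. g i ^ p ^ l)"
    by (simp add: assms(16) flip: prod_power_distrib)
  finally have "card {C. additive_conjucyclic emb q n C}
      = card (monic_divisors (\<Prod>i<t. g i ^ p ^ l))"
    using card_additive_conjucyclic by simp
  also have "\<dots> = (p ^ l + 1) ^ t"
    using card_monic_divisors_prod_prime_powers[OF assms(14,15)] by simp
  finally show ?thesis .
qed

end
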